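(* Let $\eta$ be as in the construction below. If $\nu\in\mathbb M$ is ergodic with respect to $\mathbb S\times\mathbb O$ and $\theta_0[\nu]=\eta$, then $\nu=\nu^{(\alpha)}[\eta]$ for some $\alpha\in I^{\mathbb N}$. Thus the ergodic measures in $\mathbb M$ with projection $\eta$ are exactly the measures $\nu^{(\alpha)}[\eta]$, $\alpha\in I^{\mathbb N}$.
   Context: $I=\{0,1\}$. $\mathbb S$ is the left shift on $I^{\mathbb Z}$; $\mathbb S^j\eta$ denotes pushforward. $I^{\mathbb N}$ is the space of $0$–$1$ sequences $(\alpha_i)_{i\ge1}$ with uniform Bernoulli measure $m$; $\mathbb O$ is the odometer (if $\alpha_1=\dots=\alpha_{n-1}=1$, $\alpha_n=0$, then $\mathbb O[\alpha]_i=0$ for $i<n$, $\mathbb O[\alpha]_n=1$, $\mathbb O[\alpha]_i=\alpha_i$ for $i>n$). $\mathbb M$ is the set of Borel probability measures on $I^{\mathbb Z}\times I^{\mathbb N}$ invariant under $\mathbb S\times\mathbb O$. $A_{r,k}=\{\alpha:\sum_{i=1}^k\alpha_i2^{i-1}=r\}$; $\theta_k[\nu]$ is the normalized projection to $I^{\mathbb Z}$ of $\nu$ restricted to $I^{\mathbb Z}\times A_{0,k}$. A sequence $(\theta_k)$ of probability measures with $\mathbb S^{2^k}\theta_k=\theta_k$ and $\theta_k=\frac12(\theta_{k+1}+\mathbb S^{2^k}\theta_{k+1})$ for all $k$ determines a unique $\nu\in\mathbb M$ with $\theta_k[\nu]=\theta_k$. Construction: $\eta$ is an $\mathbb S$-invariant,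 $\mathbb S$-ergodic Borel probability measure on $I^{\mathbb Z}$ such that $(I^{\mathbb Z},\eta,\mathbb S)$ has a factor isomorphic to the odometer $(I^{\mathbb N},m,\mathbb O)$. Let $\varrho_n=e^{2\pi i/2^n}$; fix measurable $f_n$ ($n\ge0$) with $f_n\circ\mathbb S=\varrho_nf_n$ $\eta$-a.e., $f_0=1$, $f_n=f_{n+1}^2$ (such a family exists, and $f_n$ takes values in $\{\varrho_n^r:0\le r<2^n\}$ a.e.). Let $B(r,n)=\{w:f_n(w)=\varrho_n^r\}$, $r(n,\alpha)=\sum_{k=0}^{n-1}2^k\alpha_{k+1}$, $\theta_n^{(\alpha)}=2^n\,\eta|_{B(r(n,\alpha),n)}$; $\nu^{(\alpha)}[\eta]$ is the element of $\mathbb M$ with $\theta_n[\nu^{(\alpha)}[\eta]]=\theta_n^{(\alpha)}$ for all $n\ge0$. *)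

theory Defs
  imports "HOL-Probability.Probability"
begin

text \<open>I^Z: bi-infinite 0-1 sequences, product sigma-algebra of discrete factors
  (= Borel sigma-algebra of the Cantor space).\<close>
definition XZ :: "(int \<Rightarrow> bool) measure" where
  "XZ = PiM UNIV (\<lambda>_. count_space UNIV)"

text \<open>I^N: one-sided 0-1 sequences; index i (0-based) stands for alpha_(i+1).\<close>
definition XN :: "(nat \<Rightarrow> bool) measure" where
  "XN = PiM UNIV (\<lambda>_. count_space UNIV)"

definition bern :: "(nat \<Rightarrow> bool) measure" where
  "bern = PiM UNIV (\<lambda>_. measure_pmf (bernoulli_pmf (1/2)))"

definition shiftZ :: "(int \<Rightarrow> bool) \<Rightarrow> (int \<Rightarrow> bool)" where
  "shiftZ w = (\<lambda>i. w (i + 1))"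

text \<open>Odometer O (adding 1 with carry; the all-ones sequence goes to all zeros).\<close>
definition odo :: "(nat \<Rightarrow> bool) \<Rightarrow> (nat \<Rightarrow> bool)" where
  "odo a = (\<lambda>i. if (\<forall>j<i. a j) then \<not> a i else a i)"

definition invariant_meas :: "'a measure \<Rightarrow> ('a \<Rightarrow> 'a) \<Rightarrow> bool" where
  "invariant_meas M T \<longleftrightarrow> T \<in> measurable M M \<and> distr M M T = M"

definition ergodic_meas :: "'a measure \<Rightarrow> ('a \<Rightarrow> 'a) \<Rightarrow> bool" where
  "ergodic_meas M T \<longleftrightarrow> invariant_meas M T \<and>
     (\<forall>A\<in>sets M. T -` A \<inter> space M = A \<longrightarrow> emeasure M A = 0 \<or> emeasure M A = 1)"

definition MM :: "((int \<Rightarrow> bool) \<times> (nat \<Rightarrow> bool)) measure set" where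
  "MM = {\<nu>. sets \<nu> = sets (XZ \<Otimes>\<^sub>M XN) \<and> prob_space \<nu> \<and>
              invariant_meas \<nu> (map_prod shiftZ odo)}"

definition A0 :: "nat \<Rightarrow> (nat \<Rightarrow> bool) set" where
  "A0 k = {a. \<forall>i<k. \<not> a i}"

definition theta :: "nat \<Rightarrow> ((int \<Rightarrow> bool) \<times> (nat \<Rightarrow> bool)) measure \<Rightarrow> (int \<Rightarrow> bool) measure" where
  "theta k \<nu> = distr (uniform_measure \<nu> (UNIV \<times> A0 k)) XZ fst"

definition has_odometer_factor :: "(int \<Rightarrow> bool) measure \<Rightarrow> bool" where
  "has_odometer_factor \<eta> \<longleftrightarrow>
     (\<exists>\<pi>. \<pi> \<in> measurable \<eta> bern \<and> distr \<eta> bern \<pi> = bern \<and>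
          (AE w in \<eta>. \<pi> (shiftZ w) = odo (\<pi> w)))"

definition rho :: "nat \<Rightarrow> complex" where
  "rho n = cis (2 * pi / 2 ^ n)"

definition eigen_family :: "(int \<Rightarrow> bool) measure \<Rightarrow> (nat \<Rightarrow> (int \<Rightarrow> bool) \<Rightarrow> complex) \<Rightarrow> bool" where
  "eigen_family \<eta> f \<longleftrightarrow>
     (\<forall>n. f n \<in> borel_measurable \<eta>) \<and>
     (\<forall>n. AE w in \<eta>. f n (shiftZ w) = rho n * f n w) \<and>
     (AE w in \<eta>. f 0 w = 1) \<and>
     (\<forall>n. AE w in \<eta>. f n w = (f (Suc n) w)\<^sup>2)"

definition Bset :: "(int \<Rightarrow> bool) measure \<Rightarrow> (nat \<Rightarrow> (int \<Rightarrow> bool) \<Rightarrow> complex) \<Rightarrow> nat \<Rightarrow> nat \<Rightarrow> (int \<Rightarrow> bool) set" where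
  "Bset \<eta> f r n = {w \<in> space \<eta>. f n w = rho n ^ r}"

definition rr :: "nat \<Rightarrow> (nat \<Rightarrow> bool) \<Rightarrow> nat" where
  "rr n a = (\<Sum>k<n. 2 ^ k * (if a k then 1 else 0))"

definition theta_alpha :: "(int \<Rightarrow> bool) measure \<Rightarrow> (nat \<Rightarrow> (int \<Rightarrow> bool) \<Rightarrow> complex) \<Rightarrow> (nat \<Rightarrow> bool) \<Rightarrow> nat \<Rightarrow> (int \<Rightarrow> bool) measure" where
  "theta_alpha \<eta> f a n = density \<eta> (\<lambda>w. 2 ^ n * indicator (Bset \<eta> f (rr n a) n) w)"

definition nu_alpha :: "(int \<Rightarrow> bool) measure \<Rightarrow> (nat \<Rightarrow> (int \<Rightarrow> bool) \<Rightarrow> complex) \<Rightarrow> (nat \<Rightarrow> bool) \<Rightarrow> ((int \<Rightarrow> bool) \<times> (nat \<Rightarrow> bool)) measure" where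
  "nu_alpha \<eta> f a = (THE \<nu>. \<nu> \<in> MM \<and> (\<forall>n. theta n \<nu> = theta_alpha \<eta> f a n))"

end

theory Submission
  imports Defs
begin

text \<open>For each n the function (w, \<alpha>) \<mapsto> f_n(w) \<rho>_n^-r(n,\<alpha>) is invariant under S \<times> O, because
  f_n \<circ> S = \<rho>_n f_n while the odometer adds 1 to r(n,\<alpha>) modulo 2^n. It takes only the 2^n values
  \<rho>_n^s, so by ergodicity of \<nu> it is almost surely equal to some \<rho>_n^s_n. The relation f_n = f_(n+1)^2
  forces s_n = s_(n+1) mod 2^n, hence s_n = r(n,\<alpha>) for a single \<alpha>. On I^Z \<times> A_(0,n) this says that
  f_n = \<rho>_n^r(n,\<alpha>), i.e. \<theta>_n[\<nu>] = 2^n \<eta>|B(r(n,\<alpha>),n). Finally an element of \<M> is determined by its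
  \<theta>_n: invariance under (S \<times> O)^r expresses its value on a rectangle E \<times> A_(r,n) through \<theta>_n.\<close>

section \<open>Binary digits and the odometer\<close>

lemma rr_0 [simp]: "rr 0 a = 0"
  by (simp add: rr_def)

lemma rr_Suc: "rr (Suc n) a = rr n a + 2 ^ n * (if a n then 1 else 0)"
  by (simp add: rr_def)

lemma rr_less: "rr n a < 2 ^ n"
  by (induction n) (auto simp: rr_Suc)

lemma rr_Suc_ge_iff: "2 ^ n \<le> rr (Suc n) a \<longleftrightarrow> a n"
  using rr_less[of n a] by (auto simp: rr_Suc)

lemma rr_eq_max_iff: "rr n a + 1 = 2 ^ n \<longleftrightarrow> (\<forall>j<n. a j)"
proof (induction n)
  case (Suc n)
  show ?case
    using Suc rr_less[of n a] by (auto simp: rr_Suc less_Suc_eq)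
qed simp

lemma rr_mod: "m \<le> n \<Longrightarrow> rr m a = rr n a mod 2 ^ m"
proof (induction n)
  case (Suc n)
  show ?case
  proof (cases "m = Suc n")
    case False
    then have "m \<le> n" using Suc.prems by simp
    then have "(2::nat) ^ n = 2 ^ m * 2 ^ (n - m)"
      by (simp flip: power_add)
    then show ?thesis
      using Suc.IH \<open>m \<le> n\<close> by (simp add: rr_Suc mod_add_left_eq)
  qed (use rr_less[of "Suc n" a] in simp)
qed simp

lemma A0_eq: "A0 n = {a. rr n a = 0}"
  by (auto simp: A0_def rr_def)

lemma rr_odo: "rr n (odo a) = (rr n a + 1) mod 2 ^ n"
proof (induction n)
  case (Suc n)
  have odo_n: "odo a n = (if \<forall>j<n. a j then \<not> a n else a n)"
    by (simp add: odo_def)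
  show ?case
  proof (cases "\<forall>j<n. a j")
    case True
    then have carry: "rr n a + 1 = 2 ^ n" using rr_eq_max_iff by blast
    have "rr (Suc n) (odo a) = 2 ^ n * (if a n then 0 else 1)"
      using Suc carry True by (simp add: rr_Suc odo_n)
    moreover have "(rr (Suc n) a + 1) mod 2 ^ Suc n = 2 ^ n * (if a n then 0 else 1)"
    proof (cases "a n")
      case True
      then have "rr (Suc n) a + 1 = 2 ^ Suc n" using carry by (simp add: rr_Suc)
      then show ?thesis using True by simp
    qed (use carry in \<open>simp add: rr_Suc\<close>)
    ultimately show ?thesis by simp
  next
    case False
    then have "rr n a + 1 < 2 ^ n"
      using rr_eq_max_iff rr_less[of n a] by (metis Suc_eq_plus1 Suc_lessI)
    moreover have "odo a n = a n" using False odo_n by simp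
    ultimately show ?thesis
      using Suc by (simp add: rr_Suc)
  qed
qed simp

lemma rr_odo_funpow: "rr n ((odo ^^ k) a) = (rr n a + k) mod 2 ^ n"
  by (induction k) (simp_all add: rr_less rr_odo mod_Suc_eq)

lemma mod_Suc_power_two:
  "x mod 2 ^ Suc n = (x::nat) mod 2 ^ n + 2 ^ n * (if bit x n then 1 else 0)"
proof -
  have "x mod (2 ^ n * 2) = 2 ^ n * (x div 2 ^ n mod 2) + x mod 2 ^ n"
    by (rule mod_mult2_eq)
  then show ?thesis
    by (simp add: bit_iff_odd odd_iff_mod_2_eq_one mult.commute)
qed

lemma consistent_residues_eq_rr:
  assumes "\<And>n. s n = s (Suc n) mod 2 ^ n"
  shows "\<exists>a. \<forall>n. rr n a = s n"
proof (intro exI allI)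
  fix n
  show "rr n (\<lambda>k. bit (s (Suc k)) k) = s n"
  proof (induction n)
    case 0
    show ?case using assms[of 0] by (simp add: rr_def)
  next
    case (Suc n)
    have "s (Suc n) = s (Suc n) mod 2 ^ Suc n"
      using assms[of "Suc n"] by simp
    also have "\<dots> = s n + 2 ^ n * (if bit (s (Suc n)) n then 1 else 0)"
      by (simp only: mod_Suc_power_two flip: assms)
    finally show ?case using Suc by (simp add: rr_Suc)
  qed
qed

section \<open>Roots of unity of order 2^n\<close>

lemma rho_power: "rho n ^ k = cis (2 * pi * real k / 2 ^ n)"
  by (simp add: rho_def Complex.DeMoivre field_simps)

lemma rho_power_mod: "rho n ^ k = rho n ^ (k mod 2 ^ n)"
proof -
  have "rho n ^ k = (rho n ^ 2 ^ n) ^ (k div 2 ^ n) * rho n ^ (k mod 2 ^ n)"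
    by (simp flip: power_mult power_add)
  also have "rho n ^ 2 ^ n = 1" by (simp add: rho_power)
  finally show ?thesis by simp
qed

lemma rho_power_eq_iff: "rho n ^ i = rho n ^ j \<longleftrightarrow> i mod 2 ^ n = j mod 2 ^ n"
proof -
  have "inj_on (\<lambda>k. cis (2 * pi * real k / real (2 ^ n))) {..<2 ^ n}"
    by (rule bij_betw_imp_inj_on[OF Complex.bij_betw_roots_unity]) simp
  then have "inj_on (\<lambda>k. rho n ^ k) {..<2 ^ n}"
    by (simp only: rho_power of_nat_power of_nat_numeral)
  then show ?thesis
    by (subst (1 2) rho_power_mod) (auto dest: inj_onD)
qed

lemma rho_power_eq_1_iff: "k < 2 ^ n \<Longrightarrow> rho n ^ k = 1 \<longleftrightarrow> k = 0"
  using rho_power_eq_iff[of n k 0] by simp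

lemma rho_Suc_power_double: "rho (Suc n) ^ (2 * k) = rho n ^ k"
  by (simp add: rho_power field_simps)

lemma rho_Suc_power_half: "rho (Suc n) ^ (2 ^ n) = -1"
  by (simp add: rho_power)

lemma square_root_chain_in_rho_powers:
  fixes g :: "nat \<Rightarrow> complex"
  assumes "g 0 = 1" and "\<And>n. g n = (g (Suc n))\<^sup>2"
  shows "\<exists>k. g n = rho n ^ k"
proof (induction n)
  case 0
  show ?case using assms(1) by (intro exI[of _ 0]) simp
next
  case (Suc n)
  then obtain k where "g n = rho n ^ k" by blast
  then have "(g (Suc n))\<^sup>2 = (rho (Suc n) ^ k)\<^sup>2"
    by (metis assms(2) rho_Suc_power_double power_mult mult.commute)
  then have "g (Suc n) = rho (Suc n) ^ k \<or> g (Suc n) = rho (Suc n) ^ (k + 2 ^ n)"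
    by (simp add: power2_eq_iff power_add rho_Suc_power_half)
  then show ?case by blast
qed

section \<open>Invariant measures\<close>

lemma invariant_meas_funpow:
  assumes "invariant_meas M T"
  shows "invariant_meas M (T ^^ k)"
proof (induction k)
  case 0
  show ?case by (simp add: invariant_meas_def distr_id2 cong: distr_cong)
next
  case (Suc k)
  have T: "T \<in> measurable M M" "distr M M T = M"
    using assms by (auto simp: invariant_meas_def)
  have Tk: "T ^^ k \<in> measurable M M" "distr M M (T ^^ k) = M"
    using Suc.IH by (auto simp: invariant_meas_def)
  have "distr M M (T ^^ k \<circ> T) = distr (distr M M T) M (T ^^ k)"
    using T(1) Tk(1) by (simp add: distr_distr)
  then have "invariant_meas M (T ^^ k \<circ> T)"
    using T Tk by (simp add: invariant_meas_def)
  then show ?case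
    by (simp only: funpow_Suc_right)
qed

lemma invariant_meas_emeasure_vimage:
  assumes "invariant_meas M T" and "A \<in> sets M"
  shows "emeasure M (T -` A \<inter> space M) = emeasure M A"
  using assms emeasure_distr[of T M M A] by (simp add: invariant_meas_def)

lemma (in prob_space) ex1_full_if_zero_one_partition:
  assumes "finite I" and "disjoint_family_on A I" and "A ` I \<subseteq> events"
    and "emeasure M (\<Union>i\<in>I. A i) = 1"
    and "\<And>i. i \<in> I \<Longrightarrow> emeasure M (A i) = 0 \<or> emeasure M (A i) = 1"
  shows "\<exists>!i\<in>I. emeasure M (A i) = 1"
proof (rule ex_ex1I)
  have "(\<Sum>i\<in>I. emeasure M (A i)) = 1"
    using sum_emeasure[OF assms(3,2,1)] assms(4) by simp
  then show "\<exists>i. i \<in> I \<and> emeasure M (A i) = 1"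
    using assms(5) by (metis (mono_tags, lifting) sum.neutral zero_neq_one)
next
  fix i j assume i: "i \<in> I \<and> emeasure M (A i) = 1" and j: "j \<in> I \<and> emeasure M (A j) = 1"
  show "i = j"
  proof (rule ccontr)
    assume "i \<noteq> j"
    then have "emeasure M (A i \<union> A j) = emeasure M (A i) + emeasure M (A j)"
      using i j assms(2,3) by (intro plus_emeasure[symmetric]) (auto simp: disjoint_family_on_def)
    then show False
      using i j emeasure_le_1[of "A i \<union> A j"] by simp
  qed
qed

section \<open>The space \<M> of (S \<times> O)-invariant measures\<close>

abbreviation shift_odo :: "(int \<Rightarrow> bool) \<times> (nat \<Rightarrow> bool) \<Rightarrow> (int \<Rightarrow> bool) \<times> (nat \<Rightarrow> bool)"
  where "shift_odo \<equiv> map_prod shiftZ odo"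

text \<open>The cylinder cyl n r is the set A_(r,n) of the paper.\<close>
abbreviation cyl :: "nat \<Rightarrow> nat \<Rightarrow> (nat \<Rightarrow> bool) set"
  where "cyl n r \<equiv> {a. rr n a = r}"

lemma space_XZ [simp]: "space XZ = UNIV"
  by (simp add: XZ_def space_PiM)

lemma space_XN [simp]: "space XN = UNIV"
  by (simp add: XN_def space_PiM)

lemma UNIV_in_sets_XZ [simp]: "UNIV \<in> sets XZ"
  by (metis sets.top space_XZ)

lemma UNIV_in_sets_XN [simp]: "UNIV \<in> sets XN"
  by (metis sets.top space_XN)

lemma shiftZ_measurable [measurable]: "shiftZ \<in> measurable XZ XZ"
  unfolding shiftZ_def XZ_def
  by (rule measurable_PiM_single') (auto simp: space_PiM)

lemma funpow_shiftZ_measurable [measurable]: "shiftZ ^^ k \<in> measurable XZ XZ"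
proof (induction k)
  case (Suc k)
  show ?case
    using measurable_comp[OF Suc.IH shiftZ_measurable] by simp
qed simp

lemma rr_measurable [measurable]: "rr n \<in> measurable XN (count_space UNIV)"
  unfolding XN_def rr_def by measurable

lemma cyl_in_sets [measurable]: "cyl n r \<in> sets XN"
  using measurable_sets[OF rr_measurable, of "{r}" n] by (simp add: vimage_def)

lemma sets_MM: "\<mu> \<in> MM \<Longrightarrow> sets \<mu> = sets (XZ \<Otimes>\<^sub>M XN)"
  by (simp add: MM_def)

lemma space_MM: "\<mu> \<in> MM \<Longrightarrow> space \<mu> = UNIV"
  using sets_eq_imp_space_eq[OF sets_MM] by (simp add: space_pair_measure)

lemma prob_space_MM: "\<mu> \<in> MM \<Longrightarrow> prob_space \<mu>"
  by (simp add: MM_def)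

lemma invariant_MM: "\<mu> \<in> MM \<Longrightarrow> invariant_meas \<mu> shift_odo"
  by (simp add: MM_def)

lemma Times_in_sets_MM: "\<mu> \<in> MM \<Longrightarrow> E \<in> sets XZ \<Longrightarrow> F \<in> sets XN \<Longrightarrow> E \<times> F \<in> sets \<mu>"
  by (simp add: sets_MM)

lemma funpow_shift_odo: "shift_odo ^^ k = map_prod (shiftZ ^^ k) (odo ^^ k)"
  by (induction k) (auto simp: fun_eq_iff)

lemma vimage_funpow_odo_cyl:
  assumes "r < 2 ^ n"
  shows "(odo ^^ r) -` cyl n r = cyl n 0"
proof -
  have shift_back: "(x + r) mod 2 ^ n = r \<longleftrightarrow> x = 0" if "x < 2 ^ n" for x :: nat
    using that assms by (cases "x + r < 2 ^ n") (auto simp: le_mod_geq)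
  show ?thesis
  proof (intro set_eqI)
    fix a
    show "a \<in> (odo ^^ r) -` cyl n r \<longleftrightarrow> a \<in> cyl n 0"
      using shift_back[OF rr_less[of n a]] by (simp add: rr_odo_funpow)
  qed
qed

lemma emeasure_MM_Times_cyl:
  assumes "\<mu> \<in> MM" and "E \<in> sets XZ" and "r < 2 ^ n"
  shows "emeasure \<mu> (E \<times> cyl n r) = emeasure \<mu> ((shiftZ ^^ r) -` E \<times> cyl n 0)"
proof -
  have "emeasure \<mu> (E \<times> cyl n r) = emeasure \<mu> ((shift_odo ^^ r) -` (E \<times> cyl n r) \<inter> space \<mu>)"
    using invariant_meas_funpow[OF invariant_MM[OF assms(1)]] Times_in_sets_MM[OF assms(1,2) cyl_in_sets]
    by (rule invariant_meas_emeasure_vimage[symmetric])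
  also have "(shift_odo ^^ r) -` (E \<times> cyl n r) \<inter> space \<mu> = (shiftZ ^^ r) -` E \<times> cyl n 0"
    unfolding space_MM[OF assms(1)] funpow_shift_odo vimage_funpow_odo_cyl[OF assms(3), symmetric]
    by auto
  finally show ?thesis .
qed

lemma measure_MM_A0:
  assumes "\<mu> \<in> MM"
  shows "measure \<mu> (UNIV \<times> cyl n 0) = 1 / 2 ^ n"
proof -
  interpret prob_space \<mu> using prob_space_MM[OF assms] .
  have blocks: "prob (UNIV \<times> cyl n r) = prob (UNIV \<times> cyl n 0)" if "r < 2 ^ n" for r
    using emeasure_MM_Times_cyl[OF assms UNIV_in_sets_XZ that] by (simp add: measure_def)
  have "(\<Union>r<2 ^ n. UNIV \<times> cyl n r) = space \<mu>"
    using rr_less by (auto simp: space_MM[OF assms])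
  then have "1 = prob (\<Union>r<2 ^ n. UNIV \<times> cyl n r)"
    by (simp add: prob_space)
  also have "\<dots> = (\<Sum>r<2 ^ n. prob (UNIV \<times> cyl n r))"
    by (intro finite_measure_finite_Union)
      (auto simp: disjoint_family_on_def intro!: Times_in_sets_MM[OF assms UNIV_in_sets_XZ])
  also have "\<dots> = (\<Sum>r<(2::nat) ^ n. prob (UNIV \<times> cyl n 0))"
    by (intro sum.cong refl blocks) simp
  also have "\<dots> = 2 ^ n * prob (UNIV \<times> cyl n 0)"
    by simp
  finally show ?thesis
    by (simp add: field_simps)
qed

lemma ennreal_two_power: "ennreal (2 ^ n) = 2 ^ n"
  by (metis ennreal_numeral ennreal_power zero_le_numeral)

lemma emeasure_theta:
  assumes "\<mu> \<in> MM" and "E \<in> sets XZ"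
  shows "emeasure (theta n \<mu>) E = 2 ^ n * emeasure \<mu> (E \<times> cyl n 0)"
proof -
  interpret prob_space \<mu> using prob_space_MM[OF assms(1)] .
  let ?U = "uniform_measure \<mu> (UNIV \<times> A0 n)"
  have A0: "UNIV \<times> A0 n \<in> sets \<mu>"
    unfolding A0_eq by (intro Times_in_sets_MM[OF assms(1)] UNIV_in_sets_XZ cyl_in_sets)
  have "fst \<in> measurable ?U XZ"
    using sets_MM[OF assms(1)] by (simp cong: measurable_cong_sets)
  then have "emeasure (theta n \<mu>) E = emeasure ?U (E \<times> UNIV)"
    using assms by (simp add: theta_def emeasure_distr space_MM vimage_fst)
  also have "\<dots> = emeasure \<mu> (E \<times> cyl n 0) / emeasure \<mu> (UNIV \<times> A0 n)"
    using Times_in_sets_MM[OF assms(1,2) UNIV_in_sets_XN] A0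
    by (subst emeasure_uniform_measure) (auto simp: A0_eq Times_Int_Times)
  also have "\<dots> = 2 ^ n * emeasure \<mu> (E \<times> cyl n 0)"
    using measure_MM_A0[OF assms(1), of n] ennreal_two_power[of n]
    by (simp add: A0_eq emeasure_eq_measure divide_ennreal ennreal_mult mult.commute)
  finally show ?thesis .
qed

lemma cyl_Int_cyl: "m \<le> n \<Longrightarrow> cyl m r \<inter> cyl n s = (if s mod 2 ^ m = r then cyl n s else {})"
  by (auto simp: rr_mod[of m n])

lemma sets_XN_cylinders: "sets XN = sigma_sets UNIV {cyl n r | n r. True}"
proof -
  have "(\<Pi>\<^sub>E i\<in>UNIV. UNIV) = (UNIV :: (nat \<Rightarrow> bool) set)"
    by auto
  then have coords: "sets XN = sigma_sets UNIV {{a. a i \<in> B} | (i::nat) (B::bool set). True}"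
    unfolding XN_def sets_PiM_single by simp
  also have "\<dots> = sigma_sets UNIV {cyl n r | n r. True}"
  proof (rule sigma_sets_eqI)
    fix C assume "C \<in> {{a. a i \<in> B} | (i::nat) (B::bool set). True}"
    then obtain i B where C: "C = {a. a i \<in> B}" by blast
    have "C = {a. (2 ^ i \<le> rr (Suc i) a) \<in> B}"
      by (simp add: C rr_Suc_ge_iff)
    also have "\<dots> = \<Union>((\<lambda>r. cyl (Suc i) r) ` {r. (2 ^ i \<le> r) \<in> B})"
      by blast
    finally show "C \<in> sigma_sets UNIV {cyl n r | n r. True}"
      by (simp only:) (rule sigma_sets_UNION, auto)
  next
    fix C assume "C \<in> {cyl n r | n r. True}"
    then show "C \<in> sigma_sets UNIV {{a. a i \<in> B} | (i::nat) (B::bool set). True}"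
      using cyl_in_sets coords by blast
  qed
  finally show ?thesis .
qed

definition cyl_rects :: "((int \<Rightarrow> bool) \<times> (nat \<Rightarrow> bool)) set set" where
  "cyl_rects = {E \<times> cyl n r | E n r. E \<in> sets XZ}"

lemma sets_XZ_XN_cyl_rects: "sets (XZ \<Otimes>\<^sub>M XN) = sigma_sets UNIV cyl_rects"
proof -
  have "sets (XZ \<Otimes>\<^sub>M XN) =
      sets (sigma (space XZ \<times> space XN) {E \<times> F | E F. E \<in> sets XZ \<and> F \<in> {cyl n r | n r. True}})"
  proof (rule sets_pair_eq[where Ca = "{UNIV}" and Cb = "{cyl 0 0}"])
    show "sets XZ = sigma_sets (space XZ) (sets XZ)" by (simp only: sets.sigma_sets_eq)
    show "sets XN = sigma_sets (space XN) {cyl n r | n r. True}"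
      by (simp add: sets_XN_cylinders)
    show "{cyl 0 0} \<subseteq> {cyl n r | n r. True}" by blast
    show "sets XZ \<subseteq> Pow (space XZ)" by (rule sets.space_closed)
    show "{cyl n r | n r. True} \<subseteq> Pow (space XN)" by simp
    show "{UNIV} \<subseteq> sets XZ" using UNIV_in_sets_XZ by simp
    show "\<Union>{UNIV} = space XZ" "\<Union>{cyl 0 0} = space XN" by simp_all
  qed simp_all
  also have "{E \<times> F | E F. E \<in> sets XZ \<and> F \<in> {cyl n r | n r. True}} = cyl_rects"
    by (auto simp: cyl_rects_def)
  finally show ?thesis
    by (simp add: sets_measure_of_conv)
qed

lemma Int_stable_cyl_rects: "Int_stable cyl_rects"
proof (rule Int_stableI)
  fix X Y assume "X \<in> cyl_rects" "Y \<in> cyl_rects"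
  then obtain E m r E' n s where X: "X = E \<times> cyl m r" and Y: "Y = E' \<times> cyl n s"
    and E: "E \<inter> E' \<in> sets XZ"
    by (auto simp: cyl_rects_def)
  have empty: "cyl 0 1 = {}" by simp
  have "X \<inter> Y = (E \<inter> E') \<times> (cyl m r \<inter> cyl n s)"
    by (auto simp: X Y)
  moreover obtain k t where "cyl m r \<inter> cyl n s = cyl k t"
    using cyl_Int_cyl[of m n r s] cyl_Int_cyl[of n m s r] empty
    by (cases "m \<le> n") (metis, metis Int_commute nle_le)
  ultimately have "X \<inter> Y = (E \<inter> E') \<times> cyl k t"
    by simp
  then show "X \<inter> Y \<in> cyl_rects"
    using E unfolding cyl_rects_def by blast
qed

lemma MM_eqI_theta:
  assumes "\<mu> \<in> MM" and "\<mu>' \<in> MM" and "\<And>n. theta n \<mu> = theta n \<mu>'"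
  shows "\<mu> = \<mu>'"
proof (rule measure_eqI_generator_eq[OF Int_stable_cyl_rects])
  show "sets \<mu> = sigma_sets UNIV cyl_rects" "sets \<mu>' = sigma_sets UNIV cyl_rects"
    using assms(1,2) by (simp_all add: sets_MM sets_XZ_XN_cyl_rects)
  have "UNIV \<times> cyl 0 0 \<in> cyl_rects"
    unfolding cyl_rects_def using UNIV_in_sets_XZ by blast
  then show "range (\<lambda>_. UNIV \<times> cyl 0 0) \<subseteq> cyl_rects"
    by blast
  show "emeasure \<mu> (UNIV \<times> cyl 0 0) \<noteq> \<infinity>"
    using prob_space.emeasure_space_1[OF prob_space_MM[OF assms(1)]]
    by (simp add: space_MM[OF assms(1)])
  fix X assume "X \<in> cyl_rects"
  then obtain E n r where X: "X = E \<times> cyl n r" and E: "E \<in> sets XZ"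
    by (auto simp: cyl_rects_def)
  show "emeasure \<mu> X = emeasure \<mu>' X"
  proof (cases "r < 2 ^ n")
    case True
    have E': "(shiftZ ^^ r) -` E \<in> sets XZ"
      using measurable_sets[OF funpow_shiftZ_measurable E] by simp
    have "2 ^ n * emeasure \<mu> X = emeasure (theta n \<mu>) ((shiftZ ^^ r) -` E)"
      unfolding X emeasure_MM_Times_cyl[OF assms(1) E True] emeasure_theta[OF assms(1) E'] ..
    also have "\<dots> = emeasure (theta n \<mu>') ((shiftZ ^^ r) -` E)"
      by (simp only: assms(3))
    also have "\<dots> = 2 ^ n * emeasure \<mu>' X"
      unfolding X emeasure_MM_Times_cyl[OF assms(2) E True] emeasure_theta[OF assms(2) E'] ..
    finally show ?thesis
      by (simp add: ennreal_mult_cancel_left power_eq_top_ennreal)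
  next
    case False
    then have "X = {}"
      using rr_less by (auto simp: X)
    then show ?thesis by simp
  qed
qed (auto simp: cyl_rects_def)

section \<open>Ergodic measures over \<eta>\<close>

definition shiftZ_int :: "int \<Rightarrow> (int \<Rightarrow> bool) \<Rightarrow> (int \<Rightarrow> bool)" where
  "shiftZ_int k w = (\<lambda>i. w (i + k))"

lemma shiftZ_int_measurable [measurable]: "shiftZ_int k \<in> measurable XZ XZ"
  unfolding shiftZ_int_def XZ_def
  by (rule measurable_PiM_single') (auto simp: space_PiM)

lemma shiftZ_int_shiftZ_int: "shiftZ_int k (shiftZ_int l w) = shiftZ_int (k + l) w"
  by (simp add: shiftZ_int_def add.assoc)

lemma shiftZ_int_0 [simp]: "shiftZ_int 0 w = w"
  by (simp add: shiftZ_int_def)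

lemma shiftZ_int_of_nat: "shiftZ_int (int m) = shiftZ ^^ m"
proof (induction m)
  case (Suc m)
  have "shiftZ_int (int (Suc m)) w = shiftZ (shiftZ_int (int m) w)" for w
    by (simp add: shiftZ_int_def shiftZ_def add.assoc)
  then show ?case
    using Suc by (simp add: fun_eq_iff)
qed (simp add: fun_eq_iff)

lemma emeasure_vimage_shiftZ_int:
  assumes "invariant_meas \<eta> shiftZ" and "sets \<eta> = sets XZ" and "A \<in> sets XZ"
  shows "emeasure \<eta> (shiftZ_int k -` A) = emeasure \<eta> A"
proof -
  have space: "space \<eta> = UNIV"
    using sets_eq_imp_space_eq[OF assms(2)] by simp
  have shift_pow: "emeasure \<eta> ((shiftZ ^^ m) -` B) = emeasure \<eta> B" if "B \<in> sets XZ" for B m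
    using invariant_meas_emeasure_vimage[OF invariant_meas_funpow[OF assms(1)], of B m]
      that assms(2) space by simp
  show ?thesis
  proof (cases "0 \<le> k")
    case True
    then show ?thesis
      using shift_pow[OF assms(3), of "nat k"] by (simp add: shiftZ_int_of_nat[symmetric])
  next
    case False
    have "shiftZ_int (int (nat (- k))) -` (shiftZ_int k -` A) = A"
      using False by (auto simp: shiftZ_int_shiftZ_int)
    then have "(shiftZ ^^ nat (- k)) -` (shiftZ_int k -` A) = A"
      by (simp only: shiftZ_int_of_nat)
    then show ?thesis
      using shift_pow[of "shiftZ_int k -` A" "nat (- k)"] measurable_sets[OF shiftZ_int_measurable assms(3)]
      by simp
  qed
qed

lemma AE_shiftZ_int:
  assumes "invariant_meas \<eta> shiftZ" and "sets \<eta> = sets XZ"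
    and "{w. P w} \<in> sets XZ" and "AE w in \<eta>. P w"
  shows "AE w in \<eta>. \<forall>k. P (shiftZ_int k w)"
proof -
  have space: "space \<eta> = UNIV"
    using sets_eq_imp_space_eq[OF assms(2)] by simp
  have null: "{w. \<not> P w} \<in> sets XZ"
    using sets.Diff[OF UNIV_in_sets_XZ assms(3)] by (simp add: set_diff_eq)
  have "AE w in \<eta>. P (shiftZ_int k w)" for k
  proof -
    have "emeasure \<eta> (shiftZ_int k -` ({w. \<not> P w})) = emeasure \<eta> ({w. \<not> P w})"
      by (rule emeasure_vimage_shiftZ_int[OF assms(1,2) null])
    also have "\<dots> = 0"
      using assms(4) null AE_iff_measurable[of "{w. \<not> P w}" \<eta> P] by (simp add: space assms(2))
    finally show ?thesis
      using measurable_sets[OF shiftZ_int_measurable null, of k]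
      by (intro AE_I[where N = "shiftZ_int k -` ({w. \<not> P w})"]) (auto simp: space assms(2))
  qed
  then show ?thesis
    by (simp add: AE_all_countable)
qed

lemma pred_eq_complex [measurable]:
  fixes g h :: "'a \<Rightarrow> complex"
  shows "g \<in> borel_measurable M \<Longrightarrow> h \<in> borel_measurable M \<Longrightarrow> Measurable.pred M (\<lambda>x. g x = h x)"
  unfolding pred_def by (rule measurable_equality_set)

locale odometer_lift =
  fixes \<eta> :: "(int \<Rightarrow> bool) measure"
    and f :: "nat \<Rightarrow> (int \<Rightarrow> bool) \<Rightarrow> complex"
    and \<nu> :: "((int \<Rightarrow> bool) \<times> (nat \<Rightarrow> bool)) measure"
  assumes sets_eta: "sets \<eta> = sets XZ"
    and invariant_eta: "invariant_meas \<eta> shiftZ"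
    and eigen: "eigen_family \<eta> f"
    and nu_MM: "\<nu> \<in> MM"
    and ergodic_nu: "ergodic_meas \<nu> shift_odo"
    and theta_0_nu: "theta 0 \<nu> = \<eta>"
begin

lemma space_eta [simp]: "space \<eta> = UNIV"
  using sets_eq_imp_space_eq[OF sets_eta] by simp

lemma f_measurable [measurable]: "f n \<in> borel_measurable XZ"
  using eigen sets_eta by (simp add: eigen_family_def cong: measurable_cong_sets)

definition eigen_point :: "(int \<Rightarrow> bool) \<Rightarrow> bool" where
  "eigen_point w \<longleftrightarrow> f 0 w = 1 \<and> (\<forall>n. f n (shiftZ w) = rho n * f n w) \<and> (\<forall>n. f n w = (f (Suc n) w)\<^sup>2)"

lemma eigen_point_sets [measurable]: "{w. eigen_point w} \<in> sets XZ"
proof -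
  have "{w \<in> space XZ. eigen_point w} \<in> sets XZ"
    unfolding eigen_point_def by measurable
  then show ?thesis by simp
qed

lemma AE_eigen_point: "AE w in \<eta>. eigen_point w"
  using eigen by (simp add: eigen_family_def eigen_point_def AE_all_countable)

text \<open>Ergodicity of \<nu> only applies to exactly invariant sets, hence the whole orbit is required.\<close>
definition good :: "(int \<Rightarrow> bool) set" where
  "good = {w. \<forall>k. eigen_point (shiftZ_int k w)}"

lemma good_sets [measurable]: "good \<in> sets XZ"
proof -
  have "{w \<in> space XZ. \<forall>k::int. shiftZ_int k w \<in> {w. eigen_point w}} \<in> sets XZ"
    by measurable
  then show ?thesis by (simp add: good_def)
qed

lemma AE_good: "AE w in \<eta>. w \<in> good"
  using AE_shiftZ_int[OF invariant_eta sets_eta eigen_point_sets AE_eigen_point]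
  by (simp add: good_def)

lemma shiftZ_in_good_iff: "shiftZ w \<in> good \<longleftrightarrow> w \<in> good"
proof -
  have "shiftZ_int k (shiftZ w) = shiftZ_int (k + 1) w" for k
    by (simp add: shiftZ_int_def shiftZ_def algebra_simps)
  moreover have "(\<forall>k. eigen_point (shiftZ_int (k + 1) w)) \<longleftrightarrow> (\<forall>k. eigen_point (shiftZ_int k w))"
  proof
    assume "\<forall>k. eigen_point (shiftZ_int (k + 1) w)"
    then show "\<forall>k. eigen_point (shiftZ_int k w)"
      by (metis diff_add_cancel)
  qed simp
  ultimately show ?thesis
    by (simp add: good_def)
qed

lemma eigen_point_if_good: "w \<in> good \<Longrightarrow> eigen_point w"
  using shiftZ_int_0[of w] by (metis good_def mem_Collect_eq)

lemma emeasure_nu_Times_UNIV: "E \<in> sets XZ \<Longrightarrow> emeasure \<nu> (E \<times> UNIV) = emeasure \<eta> E"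
  using emeasure_theta[OF nu_MM, of E 0] by (simp add: theta_0_nu)

lemma emeasure_nu_good: "emeasure \<nu> (good \<times> UNIV) = 1"
proof -
  interpret prob_space \<nu> using prob_space_MM[OF nu_MM] .
  have "emeasure \<eta> good = emeasure \<eta> (space \<eta>)"
    using AE_good by (intro emeasure_eq_AE) (auto simp: sets_eta)
  moreover have "emeasure \<eta> (space \<eta>) = 1"
    using emeasure_nu_Times_UNIV[OF UNIV_in_sets_XZ] emeasure_space_1
    by (simp add: space_MM[OF nu_MM])
  ultimately show ?thesis
    using emeasure_nu_Times_UNIV[OF good_sets] by simp
qed

definition level :: "nat \<Rightarrow> nat \<Rightarrow> ((int \<Rightarrow> bool) \<times> (nat \<Rightarrow> bool)) set" where
  "level n s = {(w, a). w \<in> good \<and> f n w = rho n ^ (s + rr n a)}"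

lemma level_sets: "level n s \<in> sets \<nu>"
proof -
  have "{x \<in> space (XZ \<Otimes>\<^sub>M XN). fst x \<in> good \<and> f n (fst x) = rho n ^ ((\<lambda>k. s + k) (rr n (snd x)))}
      \<in> sets (XZ \<Otimes>\<^sub>M XN)"
    by measurable
  moreover have "level n s = {x. fst x \<in> good \<and> f n (fst x) = rho n ^ (s + rr n (snd x))}"
    by (auto simp: level_def)
  ultimately show ?thesis
    by (simp add: sets_MM[OF nu_MM] space_pair_measure)
qed

lemma vimage_shift_odo_level: "shift_odo -` level n s \<inter> space \<nu> = level n s"
proof -
  have "(shiftZ w, odo a) \<in> level n s \<longleftrightarrow> (w, a) \<in> level n s" for w a
  proof (cases "w \<in> good")
    case True
    have "(s + rr n (odo a)) mod 2 ^ n = Suc (s + rr n a) mod 2 ^ n"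
      unfolding rr_odo by (simp add: mod_add_right_eq)
    then have "rho n ^ (s + rr n (odo a)) = rho n ^ Suc (s + rr n a)"
      by (simp only: rho_power_eq_iff)
    moreover have "f n (shiftZ w) = rho n * f n w"
      using eigen_point_if_good[OF True] unfolding eigen_point_def by blast
    ultimately have "f n (shiftZ w) = rho n ^ (s + rr n (odo a)) \<longleftrightarrow> rho n * f n w = rho n * rho n ^ (s + rr n a)"
      by simp
    also have "\<dots> \<longleftrightarrow> f n w = rho n ^ (s + rr n a)"
      by (simp add: rho_def)
    finally show ?thesis
      using True by (simp add: level_def shiftZ_in_good_iff)
  qed (simp add: level_def shiftZ_in_good_iff)
  then show ?thesis
    by (auto simp: space_MM[OF nu_MM])
qed

lemma level_zero_one: "emeasure \<nu> (level n s) = 0 \<or> emeasure \<nu> (level n s) = 1"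
  using ergodic_nu level_sets vimage_shift_odo_level by (simp add: ergodic_meas_def)

lemma level_disjoint: "disjoint_family_on (level n) {..<2 ^ n}"
  unfolding disjoint_family_on_def
proof (intro ballI impI)
  fix s t :: nat assume "s \<in> {..<2 ^ n}" "t \<in> {..<2 ^ n}" "s \<noteq> t"
  then have "rho n ^ s \<noteq> rho n ^ t"
    by (simp add: rho_power_eq_iff)
  then have "rho n ^ (s + k) \<noteq> rho n ^ (t + k)" for k
    by (simp add: power_add rho_def)
  then show "level n s \<inter> level n t = {}"
    by (auto simp: level_def) (metis)
qed

lemma UN_level: "(\<Union>s<2 ^ n. level n s) = good \<times> UNIV"
proof (intro equalityI subsetI)
  fix x :: "(int \<Rightarrow> bool) \<times> (nat \<Rightarrow> bool)" assume "x \<in> good \<times> UNIV"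
  then obtain w a where x: "x = (w, a)" and w: "w \<in> good" by auto
  obtain k where k: "f n w = rho n ^ k"
    using square_root_chain_in_rho_powers[of "\<lambda>n. f n w"] eigen_point_if_good[OF w]
    unfolding eigen_point_def by blast
  define s where "s = (k + (2 ^ n - rr n a)) mod 2 ^ n"
  have "(s + rr n a) mod 2 ^ n = (k + (2 ^ n - rr n a) + rr n a) mod 2 ^ n"
    by (simp add: s_def mod_add_left_eq)
  also have "\<dots> = k mod 2 ^ n"
    using rr_less[of n a] by simp
  finally have "x \<in> level n s"
    using w k by (simp add: x level_def rho_power_eq_iff)
  then show "x \<in> (\<Union>s<2 ^ n. level n s)"
    by (auto simp: s_def)
qed (auto simp: level_def)

lemma ex1_full_level: "\<exists>!s\<in>{..<2 ^ n}. emeasure \<nu> (level n s) = 1"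
proof (rule prob_space.ex1_full_if_zero_one_partition[OF prob_space_MM[OF nu_MM]])
  show "emeasure \<nu> (\<Union>s\<in>{..<2 ^ n}. level n s) = 1"
    using UN_level emeasure_nu_good by simp
qed (use level_disjoint level_sets level_zero_one in auto)

definition phase :: "nat \<Rightarrow> nat" where
  "phase n = (THE s. s < 2 ^ n \<and> emeasure \<nu> (level n s) = 1)"

lemma phase_less: "phase n < 2 ^ n"
  and emeasure_level_phase: "emeasure \<nu> (level n (phase n)) = 1"
  using theI'[OF ex1_full_level[of n, simplified]] by (simp_all add: phase_def)

lemma phase_unique: "s < 2 ^ n \<Longrightarrow> emeasure \<nu> (level n s) = 1 \<Longrightarrow> s = phase n"
  using ex1_full_level[of n] phase_less emeasure_level_phase by auto

lemma level_Suc_subset: "level (Suc n) s \<subseteq> level n (s mod 2 ^ n)"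
proof (safe)
  fix w a assume "(w, a) \<in> level (Suc n) s"
  then have w: "w \<in> good" and fw: "f (Suc n) w = rho (Suc n) ^ (s + rr (Suc n) a)"
    by (simp_all add: level_def)
  have "f n w = (f (Suc n) w)\<^sup>2"
    using eigen_point_if_good[OF w] unfolding eigen_point_def by blast
  also have "\<dots> = rho (Suc n) ^ (2 * (s + rr (Suc n) a))"
    unfolding fw by (simp add: power_mult[symmetric] mult.commute)
  also have "\<dots> = rho n ^ (s + rr (Suc n) a)"
    by (rule rho_Suc_power_double)
  also have "\<dots> = rho n ^ (s mod 2 ^ n + rr n a)"
    unfolding rho_power_eq_iff rr_mod[of n "Suc n" a, OF le_SucI[OF order_refl]]
    by (simp add: mod_add_eq)
  finally show "(w, a) \<in> level n (s mod 2 ^ n)"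
    using w by (simp add: level_def)
qed

lemma phase_eq_phase_Suc_mod: "phase n = phase (Suc n) mod 2 ^ n"
proof (rule phase_unique[symmetric])
  interpret prob_space \<nu> using prob_space_MM[OF nu_MM] .
  have "1 \<le> emeasure \<nu> (level n (phase (Suc n) mod 2 ^ n))"
    using emeasure_mono[OF level_Suc_subset[of n "phase (Suc n)"] level_sets]
      emeasure_level_phase[of "Suc n"] by simp
  then show "emeasure \<nu> (level n (phase (Suc n) mod 2 ^ n)) = 1"
    using emeasure_le_1 antisym by blast
qed simp

lemma Bset_sets: "Bset \<eta> f j n \<in> sets XZ"
proof -
  have "{w \<in> space XZ. f n w = rho n ^ j} \<in> sets XZ"
    by measurable
  then show ?thesis
    by (simp add: Bset_def)
qed

lemma emeasure_nu_Times_A0: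
  assumes "E \<in> sets XZ"
  shows "emeasure \<nu> (E \<times> cyl n 0) = emeasure \<eta> (E \<inter> Bset \<eta> f (phase n) n)"
proof -
  let ?B = "Bset \<eta> f (phase n) n"
  have B: "?B \<in> sets XZ"
    by (rule Bset_sets)
  interpret prob_space \<nu> using prob_space_MM[OF nu_MM] .
  have "prob (level n (phase n)) = 1"
    using emeasure_level_phase by (simp add: emeasure_eq_measure)
  then have "AE x in \<nu>. x \<in> level n (phase n)"
    by (rule AE_prob_1)
  then have "AE x in \<nu>. x \<in> E \<times> cyl n 0 \<longleftrightarrow> x \<in> (E \<inter> ?B) \<times> UNIV"
  proof (rule eventually_mono)
    fix x assume "x \<in> level n (phase n)"
    then obtain w a where x: "x = (w, a)" and fw: "f n w = rho n ^ (phase n + rr n a)"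
      by (auto simp: level_def)
    have "rho n ^ (phase n + rr n a) = rho n ^ phase n \<longleftrightarrow> rr n a = 0"
      using rho_power_eq_1_iff[OF rr_less, of n a] by (simp add: power_add rho_def)
    then show "x \<in> E \<times> cyl n 0 \<longleftrightarrow> x \<in> (E \<inter> ?B) \<times> UNIV"
      using fw by (auto simp: x Bset_def)
  qed
  then have "emeasure \<nu> (E \<times> cyl n 0) = emeasure \<nu> ((E \<inter> ?B) \<times> UNIV)"
    using assms B by (intro emeasure_eq_AE) (auto intro!: Times_in_sets_MM[OF nu_MM])
  also have "\<dots> = emeasure \<eta> (E \<inter> ?B)"
    using assms B by (intro emeasure_nu_Times_UNIV) auto
  finally show ?thesis .
qed

lemma theta_nu:
  assumes "rr n \<alpha> = phase n"
  shows "theta n \<nu> = theta_alpha \<eta> f \<alpha> n"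
proof (rule measure_eqI)
  show "sets (theta n \<nu>) = sets (theta_alpha \<eta> f \<alpha> n)"
    by (simp add: theta_def theta_alpha_def sets_eta)
  fix E assume "E \<in> sets (theta n \<nu>)"
  then have E: "E \<in> sets \<eta>"
    by (simp add: theta_def sets_eta)
  let ?B = "Bset \<eta> f (phase n) n"
  have B: "?B \<in> sets \<eta>"
    using Bset_sets sets_eta by simp
  have "emeasure (theta n \<nu>) E = 2 ^ n * emeasure \<eta> (E \<inter> ?B)"
    using E emeasure_theta[OF nu_MM, of E n] emeasure_nu_Times_A0[of E n] by (simp add: sets_eta)
  also have "\<dots> = (\<integral>\<^sup>+ w. (2 ^ n * indicator ?B w) * indicator E w \<partial>\<eta>)"
    using E B by (simp add: nn_integral_cmult_indicator Int_commute mult.assoc flip: indicator_inter_arith)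
  also have "\<dots> = emeasure (theta_alpha \<eta> f \<alpha> n) E"
    using E B by (simp add: theta_alpha_def assms emeasure_density)
  finally show "emeasure (theta n \<nu>) E = emeasure (theta_alpha \<eta> f \<alpha> n) E" .
qed

lemma ex_nu_alpha: "\<exists>\<alpha>. \<nu> = nu_alpha \<eta> f \<alpha>"
proof -
  obtain \<alpha> where \<alpha>: "\<And>n. rr n \<alpha> = phase n"
    using consistent_residues_eq_rr[OF phase_eq_phase_Suc_mod] by blast
  have "\<nu> \<in> MM \<and> (\<forall>n. theta n \<nu> = theta_alpha \<eta> f \<alpha> n)"
    using nu_MM theta_nu[OF \<alpha>] by blast
  moreover have "\<nu>' = \<nu>" if "\<nu>' \<in> MM \<and> (\<forall>n. theta n \<nu>' = theta_alpha \<eta> f \<alpha> n)" for \<nu>'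
    using that nu_MM theta_nu[OF \<alpha>] by (intro MM_eqI_theta) auto
  ultimately have "nu_alpha \<eta> f \<alpha> = \<nu>"
    unfolding nu_alpha_def by (rule the_equality)
  then show ?thesis by blast
qed

end

theorem lemma7:
  fixes \<eta> :: "(int \<Rightarrow> bool) measure"
    and f :: "nat \<Rightarrow> (int \<Rightarrow> bool) \<Rightarrow> complex"
    and \<nu> :: "((int \<Rightarrow> bool) \<times> (nat \<Rightarrow> bool)) measure"
  assumes "prob_space \<eta>" and "sets \<eta> = sets XZ"
    and "ergodic_meas \<eta> shiftZ"
    and "has_odometer_factor \<eta>"
    and "eigen_family \<eta> f"
    and "\<nu> \<in> MM" and "ergodic_meas \<nu> (map_prod shiftZ odo)"
    and "theta 0 \<nu> = \<eta>"
  shows "\<exists>\<alpha>. \<nu> = nu_alpha \<eta> f \<alpha>"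
proof -
  \<comment> \<open>The odometer factor only guarantees that a family f exists, and f is given here.\<close>
  interpret odometer_lift \<eta> f \<nu>
    using assms(2,3,5-8) by unfold_locales (simp_all add: ergodic_meas_def)
  show ?thesis
    by (rule ex_nu_alpha)
qed

end
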